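(* There exists an absolute constant $C_1<1$ such that the following holds. Let $p$ be a prime, let $n\geq 2$ with $p>2n$, and let $A=\{v_1,\dots,v_n\}$ be a set of $n$ distinct elements of $\mathbb{Z}_p$ which is symmetric, i.e. $-v\in A$ whenever $v\in A$. Let $Y_1,Y_2,Y_3$ be independent random variables, each uniformly distributed on $A$, and set $Y=Y_1+Y_2+Y_3$ (sum in $\mathbb{Z}_p$). Then $$\max_{x\in \mathbb{Z}_p} \mathbb{P}[Y=x]\leq\frac{C_1}{n}.$$
   Context: $\mathbb{Z}_p$ denotes the cyclic group of integers modulo the prime $p$. *)

theory Defs
  imports "HOL-Probability.Probability_Mass_Function"
begin

text \<open>Z_p is modelled by the residues {0..<p} :: int set with addition mod p.
  The law of Y = Y1 + Y2 + Y3 for independent uniform Y_i on A.\<close>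

definition sum3_dist :: "int \<Rightarrow> int set \<Rightarrow> int pmf" where
  "sum3_dist p A =
     bind_pmf (pmf_of_set A) (\<lambda>y1.
     bind_pmf (pmf_of_set A) (\<lambda>y2.
     bind_pmf (pmf_of_set A) (\<lambda>y3.
     return_pmf ((y1 + y2 + y3) mod p))))"

end

theory Submission
  imports Defs "HOL-Number_Theory.Cong"
begin

text \<open>Let r(t) = |A \<inter> (A - t)| and d(t) = |A| - r(t). By the symmetry of A, the number of
  triples in A with y1 + y2 + y3 = x is the sum of r(b - x) over b \<in> A, i.e. the sum of r over
  n distinct residues. The defect d is subadditive with d(0) = 0, so the set S_k = {t. d(t) \<le> k}
  of approximate periods satisfies S_k + S_k \<subseteq> S_2k. As r sums to n^2 over Z_p, Markov's
  inequality gives |S_2k| \<le> n^2 / (n - 2k) < p for k = n div 16 and p > 2n, so the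
  Cauchy-Davenport theorem (proved with Dyson's e-transform) yields 2|S_k| - 1 \<le> |S_2k| \<le> 8n/7.
  Hence roughly 3n/7 of the residues b - x have r(b - x) \<le> n - k - 1, which saves a fixed
  fraction of n^2 in the count.\<close>

section \<open>The Cauchy-Davenport theorem in Z_p\<close>

lemma inj_on_add_mod:
  fixes p t :: int
  assumes "A \<subseteq> {0..<p}"
  shows "inj_on (\<lambda>a. (a + t) mod p) A"
proof
  fix a b assume ab: "a \<in> A" "b \<in> A" and "(a + t) mod p = (b + t) mod p"
  then have "a mod p = b mod p" by (metis add_diff_cancel_right' mod_diff_left_eq)
  moreover have "a mod p = a" "b mod p = b" using ab assms by auto
  ultimately show "a = b" by simp
qed

lemma translation_invariant_imp_full:
  fixes p t :: int
  assumes p: "prime p" and A: "A \<subseteq> {0..<p}" "A \<noteq> {}" and t: "\<not> p dvd t"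
    and closed: "\<forall>a\<in>A. (a + t) mod p \<in> A"
  shows "A = {0..<p}"
proof
  obtain a0 where a0: "a0 \<in> A" using A by blast
  have orbit: "(a0 + int j * t) mod p \<in> A" for j :: nat
  proof (induction j)
    case 0
    then show ?case using a0 A by auto
  next
    case (Suc j)
    have "((a0 + int j * t) mod p + t) mod p = (a0 + int j * t + t) mod p"
      by (rule mod_add_left_eq)
    then have "(a0 + int (Suc j) * t) mod p = ((a0 + int j * t) mod p + t) mod p"
      by (simp add: algebra_simps)
    then show ?case using closed Suc by simp
  qed
  have "coprime t p"
    using p t by (simp add: prime_imp_coprime_int coprime_commute)
  then obtain u where u: "[t * u = 1] (mod p)" using cong_solve_coprime_int by blast
  show "{0..<p} \<subseteq> A"
  proof
    fix y assume y: "y \<in> {0..<p}"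
    define j where "j = nat (((y - a0) * u) mod p)"
    have "[int j = (y - a0) * u] (mod p)"
      using p by (simp add: j_def cong_def prime_gt_0_int)
    then have "[a0 + int j * t = a0 + (y - a0) * (t * u)] (mod p)"
      by (metis cong_add_lcancel cong_scalar_right mult.assoc mult.commute)
    also have "[a0 + (y - a0) * (t * u) = a0 + (y - a0) * 1] (mod p)"
      using u by (intro cong_add_lcancel_0 cong_add cong_refl cong_mult)
    finally have "(a0 + int j * t) mod p = y"
      using y by (simp add: cong_def)
    then show "y \<in> A" using orbit[of j] by simp
  qed
qed (rule A)

definition sumset_mod :: "int \<Rightarrow> int set \<Rightarrow> int set \<Rightarrow> int set" where
  "sumset_mod p A B = (\<lambda>(a, b). (a + b) mod p) ` (A \<times> B)"

lemma sumset_mod_subset: "p > 0 \<Longrightarrow> sumset_mod p A B \<subseteq> {0..<p}"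
  unfolding sumset_mod_def by auto

lemma sumset_mod_singleton: "sumset_mod p A {b} = (\<lambda>a. (a + b) mod p) ` A"
  unfolding sumset_mod_def by auto

lemma sumset_mod_full:
  fixes p :: int
  assumes "p > 0" and "b \<in> B"
  shows "sumset_mod p {0..<p} B = {0..<p}"
proof
  show "{0..<p} \<subseteq> sumset_mod p {0..<p} B"
  proof
    fix y assume y: "y \<in> {0..<p}"
    have "y = ((y - b) mod p + b) mod p" using y by (simp add: mod_add_left_eq)
    moreover have "(y - b) mod p \<in> {0..<p}" using assms by simp
    ultimately show "y \<in> sumset_mod p {0..<p} B"
      unfolding sumset_mod_def using assms by force
  qed
qed (rule sumset_mod_subset[OF assms(1)])

lemma sumset_mod_dyson_transform:
  "sumset_mod p (A \<union> (\<lambda>b. (b + e) mod p) ` B) {b \<in> B. (b + e) mod p \<in> A} \<subseteq> sumset_mod p A B"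
proof
  fix y assume "y \<in> sumset_mod p (A \<union> (\<lambda>b. (b + e) mod p) ` B) {b \<in> B. (b + e) mod p \<in> A}"
  then obtain a b where a: "a \<in> A \<union> (\<lambda>b. (b + e) mod p) ` B" and b: "b \<in> B" "(b + e) mod p \<in> A"
    and y: "y = (a + b) mod p"
    unfolding sumset_mod_def by auto
  show "y \<in> sumset_mod p A B"
  proof (cases "a \<in> A")
    case True
    then show ?thesis using b y unfolding sumset_mod_def by force
  next
    case False
    then obtain b' where b': "b' \<in> B" "a = (b' + e) mod p" using a by auto
    have "y = ((b + e) mod p + b') mod p"
      using y b' by (simp add: mod_add_left_eq mod_add_right_eq algebra_simps)
    then show ?thesis using b b' unfolding sumset_mod_def by force
  qed
qed

lemma card_dyson_transform:
  fixes p e :: int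
  assumes "finite A" "B \<subseteq> {0..<p}"
  shows "card (A \<union> (\<lambda>b. (b + e) mod p) ` B) + card {b \<in> B. (b + e) mod p \<in> A} = card A + card B"
proof -
  let ?f = "\<lambda>b. (b + e) mod p"
  let ?B' = "{b \<in> B. ?f b \<in> A}"
  have fin: "finite B" using assms(2) finite_subset by blast
  have inj: "inj_on ?f B" using inj_on_add_mod[OF assms(2)] .
  have "A \<union> ?f ` B = A \<union> ?f ` (B - ?B')" by auto
  also have "card \<dots> = card A + card (?f ` (B - ?B'))"
    by (rule card_Un_disjoint) (use assms(1) fin in auto)
  also have "card (?f ` (B - ?B')) = card B - card ?B'"
    using fin by (simp add: card_image inj_on_subset[OF inj] card_Diff_subset)
  finally show ?thesis using fin card_mono[of B ?B'] by fastforce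
qed

lemma exists_dyson_shift:
  fixes p b1 b2 :: int
  assumes p: "prime p" and A: "A \<subseteq> {0..<p}" "A \<noteq> {}" "A \<noteq> {0..<p}"
    and B: "B \<subseteq> {0..<p}" "b1 \<in> B" "b2 \<in> B" "b1 \<noteq> b2"
  obtains e where "\<exists>b\<in>B. (b + e) mod p \<in> A" and "\<exists>b\<in>B. (b + e) mod p \<notin> A"
proof -
  have "\<exists>a\<in>A. (a + (b2 - b1)) mod p \<notin> A"
  proof (rule ccontr)
    assume "\<not> ?thesis"
    moreover have "\<not> p dvd (b2 - b1)"
    proof
      assume "p dvd (b2 - b1)"
      then have "b2 mod p = b1 mod p" by (simp add: mod_eq_dvd_iff)
      moreover have "b1 mod p = b1" "b2 mod p = b2" using B by auto
      ultimately show False using B(4) by simp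
    qed
    ultimately show False
      using translation_invariant_imp_full[OF p A(1,2)] A(3) by blast
  qed
  then obtain a where a: "a \<in> A" "(a + (b2 - b1)) mod p \<notin> A" by blast
  have "(b1 + (a - b1)) mod p \<in> A" using a A by auto
  moreover have "(b2 + (a - b1)) mod p \<notin> A" using a by (simp add: algebra_simps)
  ultimately show ?thesis using that B by blast
qed

theorem cauchy_davenport_mod:
  fixes p :: int
  assumes p: "prime p"
    and "A \<subseteq> {0..<p}" "B \<subseteq> {0..<p}" "A \<noteq> {}" "B \<noteq> {}"
  shows "min (nat p) (card A + card B - 1) \<le> card (sumset_mod p A B)"
  using assms(2-)
proof (induction "card B" arbitrary: A B rule: less_induct)
  case less
  have p0: "p > 0" using p prime_gt_0_int by blast
  have finB: "finite B" using less.prems(2) finite_subset by blast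
  consider (single) b where "B = {b}" | (two) b1 b2 where "b1 \<in> B" "b2 \<in> B" "b1 \<noteq> b2"
    using less.prems(4) by blast
  then show ?case
  proof cases
    case single
    then show ?thesis
      using less.prems(1) by (simp add: sumset_mod_singleton card_image inj_on_add_mod)
  next
    case two
    show ?thesis
    proof (cases "A = {0..<p}")
      case True
      then show ?thesis using p0 sumset_mod_full two(1) by simp
    next
      case False
      obtain e where e: "\<exists>b\<in>B. (b + e) mod p \<in> A" "\<exists>b\<in>B. (b + e) mod p \<notin> A"
        using exists_dyson_shift[OF p less.prems(1,3) False less.prems(2) two] .
      define A' where "A' = A \<union> (\<lambda>b. (b + e) mod p) ` B"
      define B' where "B' = {b \<in> B. (b + e) mod p \<in> A}"
      have "card B' < card B"
        using e(2) finB unfolding B'_def by (intro psubset_card_mono) auto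
      moreover have "A' \<subseteq> {0..<p}" "A' \<noteq> {}"
        using less.prems(1,3) p0 unfolding A'_def by auto
      moreover have "B' \<subseteq> {0..<p}" "B' \<noteq> {}"
        using less.prems(2) e(1) unfolding B'_def by auto
      ultimately have IH: "min (nat p) (card A' + card B' - 1) \<le> card (sumset_mod p A' B')"
        using less.hyps by blast
      have "card (sumset_mod p A' B') \<le> card (sumset_mod p A B)"
        unfolding A'_def B'_def
        by (intro card_mono sumset_mod_dyson_transform finite_subset[OF sumset_mod_subset[OF p0]]) auto
      moreover have "card A' + card B' = card A + card B"
        unfolding A'_def B'_def
        by (intro card_dyson_transform finite_subset[OF less.prems(1)] less.prems(2)) simp
      ultimately show ?thesis using IH by simp
    qed
  qed
qed

section \<open>Approximate periods\<close>

definition shift_overlap :: "int \<Rightarrow> int set \<Rightarrow> int \<Rightarrow> nat" where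
  "shift_overlap p A t = card {a \<in> A. (a + t) mod p \<in> A}"

definition shift_defect :: "int \<Rightarrow> int set \<Rightarrow> int \<Rightarrow> nat" where
  "shift_defect p A t = card {a \<in> A. (a + t) mod p \<notin> A}"

lemma shift_overlap_add_defect:
  "finite A \<Longrightarrow> shift_overlap p A t + shift_defect p A t = card A"
  unfolding shift_overlap_def shift_defect_def
  by (subst card_Un_disjoint[symmetric]) (auto intro: arg_cong[where f = card])

lemma shift_overlap_mod: "shift_overlap p A (t mod p) = shift_overlap p A t"
  unfolding shift_overlap_def by (simp add: mod_add_right_eq)

lemma shift_defect_mod: "shift_defect p A (t mod p) = shift_defect p A t"
  unfolding shift_defect_def by (simp add: mod_add_right_eq)

lemma shift_defect_zero:
  fixes p :: int
  assumes "A \<subseteq> {0..<p}"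
  shows "shift_defect p A 0 = 0"
proof -
  have "a mod p = a" if "a \<in> A" for a using assms that by auto
  then have "{a \<in> A. (a + 0) mod p \<notin> A} = {}" by auto
  then show ?thesis unfolding shift_defect_def by (metis card.empty)
qed

lemma shift_overlap_eq_sum:
  "finite A \<Longrightarrow> shift_overlap p A t = (\<Sum>a\<in>A. of_bool ((a + t) mod p \<in> A))"
  unfolding shift_overlap_def by (simp add: Collect_conj_eq Int_commute)

lemma shift_defect_add_le:
  fixes p s t :: int
  assumes A: "A \<subseteq> {0..<p}"
  shows "shift_defect p A (s + t) \<le> shift_defect p A s + shift_defect p A t"
proof -
  have fin: "finite A" using A finite_subset by blast
  let ?f = "\<lambda>a. (a + s) mod p"
  let ?X = "{a \<in> A. ?f a \<in> A \<and> (a + (s + t)) mod p \<notin> A}"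
  \<comment> \<open>an element pushed out of A by s + t is pushed out by s, or ?f maps it to one pushed out by t\<close>
  have "shift_defect p A (s + t) \<le> card ({a \<in> A. ?f a \<notin> A} \<union> ?X)"
    unfolding shift_defect_def using fin by (intro card_mono) auto
  also have "\<dots> \<le> shift_defect p A s + card ?X"
    unfolding shift_defect_def by (rule card_Un_le)
  finally have "shift_defect p A (s + t) \<le> shift_defect p A s + card ?X" .
  moreover have "card ?X \<le> shift_defect p A t"
    unfolding shift_defect_def
  proof (rule card_inj_on_le)
    show "inj_on ?f ?X" using inj_on_add_mod[OF A] by (rule inj_on_subset) auto
    show "?f ` ?X \<subseteq> {a \<in> A. (a + t) mod p \<notin> A}"
      by (auto simp: mod_add_left_eq add.assoc)
  qed (use fin in simp)
  ultimately show ?thesis by linarith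
qed

lemma sum_shift_overlap:
  fixes p :: int
  assumes A: "A \<subseteq> {0..<p}"
  shows "(\<Sum>t\<in>{0..<p}. shift_overlap p A t) = card A * card A"
proof -
  have fin: "finite A" using A finite_subset by blast
  have "card ({0..<p} \<inter> {t. (a + t) mod p \<in> A}) = card A" if a: "a \<in> A" for a
  proof (rule bij_betw_same_card, rule bij_betw_byWitness[where f' = "\<lambda>b. (b - a) mod p"])
    show "\<forall>t\<in>{0..<p} \<inter> {t. (a + t) mod p \<in> A}. ((a + t) mod p - a) mod p = t"
      by (simp add: mod_diff_left_eq)
    show "\<forall>b\<in>A. (a + (b - a) mod p) mod p = b"
      using A by (auto simp: mod_add_right_eq)
    show "(\<lambda>t. (a + t) mod p) ` ({0..<p} \<inter> {t. (a + t) mod p \<in> A}) \<subseteq> A" by auto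
    show "(\<lambda>b. (b - a) mod p) ` A \<subseteq> {0..<p} \<inter> {t. (a + t) mod p \<in> A}"
      using A a by (auto simp: mod_add_right_eq)
  qed
  then have "(\<Sum>a\<in>A. \<Sum>t\<in>{0..<p}. of_bool ((a + t) mod p \<in> A)) = (\<Sum>a\<in>A. card A)"
    by simp
  then show ?thesis
    by (simp add: shift_overlap_eq_sum[OF fin] sum.swap[where A = "{0..<p}"])
qed

definition approx_periods :: "int \<Rightarrow> int set \<Rightarrow> nat \<Rightarrow> int set" where
  "approx_periods p A k = {t \<in> {0..<p}. shift_defect p A t \<le> k}"

lemma approx_periods_subset: "approx_periods p A k \<subseteq> {0..<p}"
  unfolding approx_periods_def by auto

lemma zero_in_approx_periods:
  fixes p :: int
  shows "p > 0 \<Longrightarrow> A \<subseteq> {0..<p} \<Longrightarrow> 0 \<in> approx_periods p A k"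
  unfolding approx_periods_def by (simp add: shift_defect_zero)

lemma sumset_mod_approx_periods:
  fixes p :: int
  assumes "p > 0" "A \<subseteq> {0..<p}"
  shows "sumset_mod p (approx_periods p A k) (approx_periods p A l) \<subseteq> approx_periods p A (k + l)"
proof
  fix y assume "y \<in> sumset_mod p (approx_periods p A k) (approx_periods p A l)"
  then obtain s t where s: "s \<in> approx_periods p A k" and t: "t \<in> approx_periods p A l"
    and y: "y = (s + t) mod p"
    unfolding sumset_mod_def by auto
  have "shift_defect p A y \<le> shift_defect p A s + shift_defect p A t"
    using y shift_defect_mod shift_defect_add_le[OF assms(2)] by metis
  also have "\<dots> \<le> k + l" using s t unfolding approx_periods_def by simp
  finally show "y \<in> approx_periods p A (k + l)"
    unfolding approx_periods_def using y assms(1) by simp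
qed

lemma card_approx_periods_mult_le:
  fixes p :: int
  assumes A: "A \<subseteq> {0..<p}"
  shows "card (approx_periods p A k) * (card A - k) \<le> card A * card A"
proof -
  have fin: "finite A" using A finite_subset by blast
  have "card A - k \<le> shift_overlap p A t" if "t \<in> approx_periods p A k" for t
    using that shift_overlap_add_defect[OF fin, of p t] unfolding approx_periods_def by auto
  then have "card (approx_periods p A k) * (card A - k) \<le> (\<Sum>t\<in>approx_periods p A k. shift_overlap p A t)"
    using sum_bounded_below[of "approx_periods p A k" "card A - k" "shift_overlap p A"] by simp
  also have "\<dots> \<le> (\<Sum>t\<in>{0..<p}. shift_overlap p A t)"
    by (rule sum_mono2) (auto simp: approx_periods_def)
  also have "\<dots> = card A * card A" by (rule sum_shift_overlap[OF A])
  finally show ?thesis .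
qed

lemma card_approx_periods_add:
  fixes p :: int
  assumes p: "prime p" and A: "A \<subseteq> {0..<p}"
    and small: "card (approx_periods p A (k + l)) < nat p"
  shows "card (approx_periods p A k) + card (approx_periods p A l) \<le> card (approx_periods p A (k + l)) + 1"
proof -
  have p0: "p > 0" using p prime_gt_0_int by blast
  have "card (sumset_mod p (approx_periods p A k) (approx_periods p A l)) \<le> card (approx_periods p A (k + l))"
    by (intro card_mono sumset_mod_approx_periods p0 A finite_subset[OF approx_periods_subset]) simp
  moreover have "min (nat p) (card (approx_periods p A k) + card (approx_periods p A l) - 1)
      \<le> card (sumset_mod p (approx_periods p A k) (approx_periods p A l))"
    using zero_in_approx_periods[OF p0 A]
    by (intro cauchy_davenport_mod p approx_periods_subset) blast+
  ultimately show ?thesis using small by linarith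
qed

lemma sum_shift_overlap_le:
  assumes "finite A" "finite T"
  shows "(\<Sum>t\<in>T. shift_overlap p A t) + (k + 1) * card {t \<in> T. k < shift_defect p A t}
    \<le> card A * card T"
proof -
  have "(\<Sum>t\<in>T. shift_overlap p A t) + (k + 1) * card {t \<in> T. k < shift_defect p A t}
      = (\<Sum>t\<in>T. shift_overlap p A t + (k + 1) * of_bool (k < shift_defect p A t))"
    using assms(2) by (simp add: sum.distrib sum_distrib_left[symmetric] Collect_conj_eq Int_commute)
  also have "\<dots> \<le> (\<Sum>t\<in>T. card A)"
  proof (rule sum_mono)
    fix t
    have "shift_overlap p A t + shift_defect p A t = card A"
      by (rule shift_overlap_add_defect[OF assms(1)])
    then show "shift_overlap p A t + (k + 1) * of_bool (k < shift_defect p A t) \<le> card A"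
      by auto
  qed
  finally show ?thesis by (simp add: mult.commute)
qed

lemma sum_shift_overlap_translates_le:
  fixes p x :: int
  assumes A: "A \<subseteq> {0..<p}"
  shows "(\<Sum>b\<in>A. shift_overlap p A (b - x)) + (k + 1) * card A
    \<le> card A * card A + (k + 1) * card (approx_periods p A k)"
proof -
  have fin: "finite A" using A finite_subset by blast
  let ?f = "\<lambda>b. (b + - x) mod p"
  let ?T = "?f ` A"
  let ?C = "{t \<in> ?T. k < shift_defect p A t}"
  have inj: "inj_on ?f A" using inj_on_add_mod[OF A] .
  have cT: "card ?T = card A" using card_image[OF inj] .
  have "(\<Sum>b\<in>A. shift_overlap p A (b - x)) = (\<Sum>t\<in>?T. shift_overlap p A t)"
    using sum.reindex[OF inj, of "shift_overlap p A"] shift_overlap_mod[of p A] by simp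
  moreover have "(\<Sum>t\<in>?T. shift_overlap p A t) + (k + 1) * card ?C \<le> card A * card A"
    using sum_shift_overlap_le[OF fin, where T = ?T and p = p and k = k] fin unfolding cT by simp
  moreover have "card A \<le> card (approx_periods p A k) + card ?C"
  proof -
    have "?T \<subseteq> {0..<p}"
    proof
      fix t assume "t \<in> ?T"
      then obtain b where "b \<in> A" "t = ?f b" by blast
      then show "t \<in> {0..<p}" using A by auto
    qed
    then have "?T \<subseteq> approx_periods p A k \<union> ?C"
      unfolding approx_periods_def by auto
    then have "card ?T \<le> card (approx_periods p A k \<union> ?C)"
      using fin by (intro card_mono finite_UnI finite_subset[OF approx_periods_subset]) auto
    also have "\<dots> \<le> card (approx_periods p A k) + card ?C" by (rule card_Un_le)
    finally show ?thesis unfolding cT .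
  qed
  then have "(k + 1) * card A \<le> (k + 1) * card (approx_periods p A k) + (k + 1) * card ?C"
    by (metis add_mult_distrib2 mult_le_mono2)
  ultimately show ?thesis by linarith
qed

section \<open>The distribution of Y1 + Y2 + Y3\<close>

lemma symmetric_mod_iff:
  fixes p u :: int
  assumes sym: "\<forall>v\<in>A. (- v) mod p \<in> A"
  shows "(- u) mod p \<in> A \<longleftrightarrow> u mod p \<in> A"
proof
  assume "(- u) mod p \<in> A"
  then have "(- ((- u) mod p)) mod p \<in> A" using sym by blast
  then show "u mod p \<in> A" by (simp add: mod_minus_eq)
next
  assume "u mod p \<in> A"
  then have "(- (u mod p)) mod p \<in> A" using sym by blast
  then show "(- u) mod p \<in> A" by (simp add: mod_minus_eq)
qed

lemma pmf_sum3_dist: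
  assumes "finite A" "A \<noteq> {}"
  shows "pmf (sum3_dist p A) x
    = real (\<Sum>y1\<in>A. \<Sum>y2\<in>A. card {y3 \<in> A. (y1 + y2 + y3) mod p = x}) / real (card A) ^ 3"
proof -
  have "(\<Sum>y3\<in>A. indicator {x} ((y1 + y2 + y3) mod p) :: real)
      = card {y3 \<in> A. (y1 + y2 + y3) mod p = x}" for y1 y2
    using assms(1) by (simp add: indicator_def Collect_conj_eq Int_commute)
  then show ?thesis
    using assms unfolding sum3_dist_def
    by (simp add: pmf_bind integral_pmf_of_set pmf_return power3_eq_cube)
qed

lemma card_third_summand:
  fixes p x :: int
  assumes "A \<subseteq> {0..<p}" "x \<in> {0..<p}"
  shows "card {y3 \<in> A. (y1 + y2 + y3) mod p = x} = of_bool ((x - y1 - y2) mod p \<in> A)"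
proof -
  have "(y1 + y2 + y3) mod p = x \<longleftrightarrow> y3 = (x - y1 - y2) mod p" if "y3 \<in> A" for y3
  proof -
    have "(y1 + y2 + y3) mod p = x mod p \<longleftrightarrow> y3 mod p = (x - y1 - y2) mod p"
      unfolding mod_eq_dvd_iff by (simp add: algebra_simps)
    moreover have "y3 mod p = y3" "x mod p = x" using assms that by auto
    ultimately show ?thesis by simp
  qed
  then have "{y3 \<in> A. (y1 + y2 + y3) mod p = x} = A \<inter> {(x - y1 - y2) mod p}" by auto
  then show ?thesis by auto
qed

lemma pmf_sum3_dist_symmetric:
  fixes p x :: int
  assumes A: "A \<subseteq> {0..<p}" "A \<noteq> {}" and sym: "\<forall>v\<in>A. (- v) mod p \<in> A" and x: "x \<in> {0..<p}"
  shows "pmf (sum3_dist p A) x = real (\<Sum>b\<in>A. shift_overlap p A (b - x)) / real (card A) ^ 3"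
proof -
  have fin: "finite A" using A finite_subset by blast
  have "card {y3 \<in> A. (y1 + y2 + y3) mod p = x} = of_bool ((y1 + (y2 - x)) mod p \<in> A)" for y1 y2
  proof -
    have eq: "- (x - y1 - y2) = y1 + (y2 - x)" by simp
    have "(y1 + (y2 - x)) mod p \<in> A \<longleftrightarrow> (x - y1 - y2) mod p \<in> A"
      using symmetric_mod_iff[OF sym, of "x - y1 - y2"] unfolding eq .
    then show ?thesis using card_third_summand[OF A(1) x, of y1 y2] by simp
  qed
  then have "(\<Sum>y1\<in>A. \<Sum>y2\<in>A. card {y3 \<in> A. (y1 + y2 + y3) mod p = x})
      = (\<Sum>y1\<in>A. \<Sum>y2\<in>A. of_bool ((y1 + (y2 - x)) mod p \<in> A))"
    by simp
  also have "\<dots> = (\<Sum>y2\<in>A. \<Sum>y1\<in>A. of_bool ((y1 + (y2 - x)) mod p \<in> A))"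
    by (rule sum.swap)
  also have "\<dots> = (\<Sum>b\<in>A. shift_overlap p A (b - x))"
    by (simp add: shift_overlap_eq_sum[OF fin])
  finally show ?thesis by (simp only: pmf_sum3_dist[OF fin A(2)])
qed

lemma sum3_count_arith:
  fixes N K s s2 c :: real
  assumes count: "c + (K + 1) * N \<le> N * N + (K + 1) * s"
    and doubling: "2 * s \<le> s2 + 1"
    and markov: "s2 * (N - 2 * K) \<le> N * N"
    and K: "0 \<le> K" "16 * K \<le> N" "N < 16 * K + 16" and N: "2 \<le> N"
  shows "c \<le> 127 / 128 * (N * N)"
proof -
  have gap: "7 * N / 8 \<le> N - 2 * K" using K by simp
  have "s2 \<le> 8 * N / 7"
  proof (cases "s2 \<le> 0")
    case False
    then have "s2 * (7 * N / 8) \<le> N * N"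
      using markov gap mult_left_mono[OF gap, of s2] by linarith
    then show ?thesis using N by (simp add: field_simps)
  qed (use N in simp)
  then have s: "N - s \<ge> 3 * N / 7 - 1 / 2" using doubling by simp
  have "N / 16 * (3 * N / 7 - 1 / 2) \<le> (K + 1) * (N - s)"
    using K N s by (intro mult_mono) auto
  moreover have "N * N / 128 \<le> N / 16 * (3 * N / 7 - 1 / 2)"
    using N by (simp add: field_simps)
  ultimately show ?thesis using count by (simp add: algebra_simps)
qed

lemma pmf_sum3_dist_le:
  fixes p x :: int and n :: nat
  assumes p: "prime p" and n: "2 \<le> n" "2 * int n < p"
    and A: "A \<subseteq> {0..<p}" "card A = n" and sym: "\<forall>v\<in>A. (- v) mod p \<in> A"
    and x: "x \<in> {0..<p}"
  shows "pmf (sum3_dist p A) x \<le> (127 / 128) / real n"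
proof -
  define k where "k = n div 16"
  define s where "s = card (approx_periods p A k)"
  define s2 where "s2 = card (approx_periods p A (k + k))"
  define c where "c = (\<Sum>b\<in>A. shift_overlap p A (b - x))"
  have k: "16 * k \<le> n" "n < 16 * k + 16" unfolding k_def by auto
  have markov: "s2 * (n - 2 * k) \<le> n * n"
    using card_approx_periods_mult_le[OF A(1), of "k + k"] A(2) unfolding s2_def by (simp add: mult_2)
  have "n * n < nat p * (n - 2 * k)"
  proof -
    have "8 * (n * n) < (2 * n + 1) * (7 * n)" using n by (simp add: algebra_simps)
    also have "\<dots> \<le> nat p * (8 * (n - 2 * k))"
    proof (rule mult_le_mono)
      show "2 * n + 1 \<le> nat p" using n by linarith
      show "7 * n \<le> 8 * (n - 2 * k)" using k by linarith
    qed
    finally show ?thesis by simp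
  qed
  with markov have "s2 < nat p" by (meson le_less_trans mult_less_cancel2)
  then have doubling: "s + s \<le> s2 + 1"
    using card_approx_periods_add[OF p A(1)] unfolding s_def s2_def by blast
  have count: "c + (k + 1) * n \<le> n * n + (k + 1) * s"
    using sum_shift_overlap_translates_le[OF A(1), of x k] A(2) unfolding c_def s_def by simp
  have bound: "real c \<le> 127 / 128 * (real n * real n)"
  proof (rule sum3_count_arith)
    show "real c + (real k + 1) * real n \<le> real n * real n + (real k + 1) * real s"
      using of_nat_mono[where 'a = real, OF count] by (simp add: algebra_simps)
    show "real s2 * (real n - 2 * real k) \<le> real n * real n"
    proof -
      have "real (s2 * (n - 2 * k)) \<le> real (n * n)" using markov by (rule of_nat_mono)
      then show ?thesis using k by (simp add: of_nat_diff)
    qed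
  qed (use doubling k n in auto)
  have "A \<noteq> {}" using A(2) n by auto
  then have "pmf (sum3_dist p A) x = real c / real n ^ 3"
    using pmf_sum3_dist_symmetric[OF A(1) _ sym x] A(2) unfolding c_def by simp
  also have "\<dots> \<le> 127 / 128 * (real n * real n) / real n ^ 3"
    using bound by (intro divide_right_mono) auto
  also have "\<dots> = (127 / 128) / real n"
    using n by (simp add: power3_eq_cube)
  finally show ?thesis .
qed

theorem lemma3p1:
  shows "\<exists>C1::real. C1 < 1 \<and>
    (\<forall>(p::int) (n::nat) (A::int set).
       prime p \<longrightarrow> n \<ge> 2 \<longrightarrow> p > 2 * int n \<longrightarrow>
       A \<subseteq> {0..<p} \<longrightarrow> card A = n \<longrightarrow>
       (\<forall>v\<in>A. (- v) mod p \<in> A) \<longrightarrow>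
       (\<forall>x\<in>{0..<p}. pmf (sum3_dist p A) x \<le> C1 / real n))"
  using pmf_sum3_dist_le by (intro exI[of _ "127 / 128"]) auto

end
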